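(* Let $n\ge1$, let $C$ be a finite set of points in convex position, and let the edges of $K_C$ be $2$-coloured. Suppose there are disjoint sets $L,R\subset C$ with $|L|=|R|=2n^2$ such that $L$ and $R$ can be separated by a line and all edges between $L$ and $R$ have the same colour. Then the colouring contains a monochromatic non-crossing copy of $L_{2n}$.
   Context: For a finite point set $C\subset\mathbb{R}^2$ in convex position (vertex set of a convex polygon), $K_C$ is the complete graph on $C$ with edges drawn as straight segments. A monochromatic non-crossing copy of a graph $G$ is an injective map $\phi:V(G)\to C$ such that all segments $\phi(x)\phi(y)$, $xy\in E(G)$, have the same colour and no two of them share a point other than a common endpoint. The ladder graph $L_{2n}$ consists of two paths $u_1\cdots u_n$ and $v_1\cdots v_n$ plus the edges $u_iv_i$, $i\in[n]$. *)

theory Defs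
  imports "HOL-Analysis.Analysis"
begin

type_synonym pt = "real \<times> real"

definition convex_position :: "pt set \<Rightarrow> bool" where
  "convex_position C \<longleftrightarrow> (\<forall>p\<in>C. p \<notin> convex hull (C - {p}))"

text \<open>Ladder graph L_{2n}: vertex (False,i) is u_i, vertex (True,i) is v_i, i in [n].\<close>
definition ladder_V :: "nat \<Rightarrow> (bool \<times> nat) set" where
  "ladder_V n = UNIV \<times> {1..n}"

definition ladder_E :: "nat \<Rightarrow> (bool \<times> nat) set set" where
  "ladder_E n = {{(b, i), (b, Suc i)} | b i. 1 \<le> i \<and> i < n}
              \<union> {{(False, i), (True, i)} | i. 1 \<le> i \<and> i \<le> n}"

text \<open>A colouring of K_C assigns a colour to each edge, i.e. to each 2-subset {p,q}
of C.\<close>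
definition mono_noncrossing_copy ::
  "(pt set \<Rightarrow> 'c) \<Rightarrow> pt set \<Rightarrow> 'v set \<Rightarrow> 'v set set \<Rightarrow> ('v \<Rightarrow> pt) \<Rightarrow> bool" where
  "mono_noncrossing_copy col C V E \<phi> \<longleftrightarrow>
     inj_on \<phi> V \<and> \<phi> ` V \<subseteq> C \<and>
     (\<exists>c. \<forall>e\<in>E. col (\<phi> ` e) = c) \<and>
     (\<forall>e\<in>E. \<forall>f\<in>E. e \<noteq> f \<longrightarrow>
        convex hull (\<phi> ` e) \<inter> convex hull (\<phi> ` f) \<subseteq> \<phi> ` (e \<inter> f))"

end

theory Submission
  imports Defs
begin

text \<open>Enumerate the points of \<open>L \<union> R\<close> counterclockwise. As a line separates \<open>L\<close> from \<open>R\<close>,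
no four points alternate \<open>L, R, L, R\<close> around the polygon, so after a rotation of the
enumeration all of \<open>L\<close> precedes all of \<open>R\<close>. Let \<open>c\<close> be the colour of the \<open>L\<close>--\<open>R\<close> edges.
By a longest-chain argument, each half (of \<open>2n\<^sup>2\<close> points) contains either an increasing path of
\<open>n\<close> points whose consecutive edges have colour \<open>c\<close>, or \<open>2n\<close> points spanning only edges of the
other colour. In the latter case these \<open>2n\<close> points carry a ladder of the other colour; otherwise
run the path in \<open>L\<close> forward and the path in \<open>R\<close> backward, and the rungs are \<open>L\<close>--\<open>R\<close> edges
of colour \<open>c\<close>. In both cases the ladder is drawn so that no two chords of the convex polygon
interleave, and chords of a convex polygon with non-interleaving endpoints do not cross.\<close>

section \<open>Orientation\<close>

text \<open>Positive iff \<open>a, b, c\<close> turn counterclockwise.\<close>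
definition orient :: "pt \<Rightarrow> pt \<Rightarrow> pt \<Rightarrow> real" where
  "orient a b c = (fst b - fst a) * (snd c - snd a) - (snd b - snd a) * (fst c - fst a)"

lemma orient_rotate: "orient a b c = orient b c a"
  unfolding orient_def by (simp add: algebra_simps)

lemma orient_swap: "orient a c b = - orient a b c"
  unfolding orient_def by (simp add: algebra_simps)

lemma orient_degenerate [simp]: "orient a a b = 0" "orient a b a = 0" "orient a b b = 0"
  unfolding orient_def by (simp_all add: algebra_simps)

lemma orient_affine_right:
  "orient a b ((1 - u) *\<^sub>R c + u *\<^sub>R d) = (1 - u) * orient a b c + u * orient a b d"
  unfolding orient_def by (simp add: algebra_simps)

lemma collinear_if_orient_eq_0:
  assumes "orient a b c = 0"
  shows "collinear {a, b, c}"
proof (cases "a = c")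
  case False
  define v where "v = a - c"
  define x where "x = b - c"
  have vv: "v \<bullet> v \<noteq> 0" using False by (simp add: v_def)
  have cross: "fst x * snd v = snd x * fst v"
    using assms by (simp add: orient_def v_def x_def algebra_simps)
  have "(x \<bullet> v) * fst v - fst x * (v \<bullet> v) = snd v * (snd x * fst v - fst x * snd v)"
       "(x \<bullet> v) * snd v - snd x * (v \<bullet> v) = fst v * (fst x * snd v - snd x * fst v)"
    by (simp_all add: inner_prod_def algebra_simps)
  then have "x = ((x \<bullet> v) / (v \<bullet> v)) *\<^sub>R v"
    using cross vv by (simp add: prod_eq_iff field_simps)
  then show ?thesis
    unfolding collinear_3_expand
    by (intro disjI2 exI[of _ "(x \<bullet> v) / (v \<bullet> v)"]) (simp add: v_def x_def algebra_simps)
qed (simp add: collinear_3_expand)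

lemma orient_eq_0_if_in_segment:
  assumes "x \<in> convex hull {a, b}"
  shows "orient a b x = 0"
proof -
  obtain u where "x = (1 - u) *\<^sub>R a + u *\<^sub>R b"
    using assms by (auto simp: segment_convex_hull[symmetric] closed_segment_def)
  then show ?thesis by (simp add: orient_affine_right)
qed

lemma segments_disjoint_if_same_side:
  assumes "orient a b c * orient a b d > 0"
  shows "convex hull {a, b} \<inter> convex hull {c, d} = {}"
proof (rule ccontr)
  assume "\<not> ?thesis"
  then obtain x where x_ab: "x \<in> convex hull {a, b}" and x_cd: "x \<in> convex hull {c, d}" by blast
  obtain u where u: "0 \<le> u" "u \<le> 1" "x = (1 - u) *\<^sub>R c + u *\<^sub>R d"
    using x_cd by (auto simp: segment_convex_hull[symmetric] closed_segment_def)
  define s t where "s = orient a b c" and "t = orient a b d"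
  have "(1 - u) * s + u * t = 0"
    using orient_eq_0_if_in_segment[OF x_ab] u(3) by (simp add: orient_affine_right s_def t_def)
  then have "(1 - u) * s\<^sup>2 + u * (s * t) = 0"
    by (metis mult_zero_right distrib_left mult.left_commute power2_eq_square)
  moreover have "(1 - u) * s\<^sup>2 \<ge> 0" "u * (s * t) \<ge> 0"
    using u assms by (simp_all add: s_def t_def)
  ultimately have "(1 - u) * s\<^sup>2 = 0" "u * (s * t) = 0"
    by linarith+
  then show False
    using assms by (auto simp: s_def t_def)
qed

lemma segments_with_common_end_meet_only_there:
  assumes "orient a b c \<noteq> 0"
  shows "convex hull {a, b} \<inter> convex hull {a, c} \<subseteq> {a}"
proof
  fix x assume "x \<in> convex hull {a, b} \<inter> convex hull {a, c}"
  then have x_ab: "x \<in> convex hull {a, b}" and x_ac: "x \<in> convex hull {a, c}" by auto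
  obtain u where u: "x = (1 - u) *\<^sub>R a + u *\<^sub>R c"
    using x_ac by (auto simp: segment_convex_hull[symmetric] closed_segment_def)
  have "u * orient a b c = 0"
    using orient_eq_0_if_in_segment[OF x_ab] u by (simp add: orient_affine_right)
  with assms u show "x \<in> {a}" by simp
qed

lemma orient_barycentric:
  "orient a b c = orient x b c + orient a x c + orient a b x"
  "orient a b c *\<^sub>R x = orient x b c *\<^sub>R a + orient a x c *\<^sub>R b + orient a b x *\<^sub>R c"
  unfolding orient_def by (simp_all add: prod_eq_iff algebra_simps)

lemma in_triangle_if_orient_nonneg:
  assumes "orient a b c > 0" "orient x b c \<ge> 0" "orient a x c \<ge> 0" "orient a b x \<ge> 0"
  shows "x \<in> convex hull {a, b, c}"
proof -
  define D where "D = orient a b c"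
  have "x = inverse D *\<^sub>R (D *\<^sub>R x)"
    using assms(1) by (simp add: D_def)
  also have "\<dots> = (orient x b c / D) *\<^sub>R a + (orient a x c / D) *\<^sub>R b + (orient a b x / D) *\<^sub>R c"
    unfolding D_def orient_barycentric(2)[of a b c x] by (simp add: scaleR_add_right divide_inverse_commute)
  finally have "x = (orient x b c / D) *\<^sub>R a + (orient a x c / D) *\<^sub>R b + (orient a b x / D) *\<^sub>R c" .
  moreover have "orient x b c / D + orient a x c / D + orient a b x / D = 1"
    using assms(1) by (simp add: D_def flip: add_divide_distrib orient_barycentric(1))
  ultimately show ?thesis
    unfolding convex_hull_3 using assms by (force simp: D_def)
qed

lemma line_separated_not_alternating:
  assumes "orient a b c > 0" "orient a b d > 0" "orient a c d > 0" "orient b c d > 0"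
    and "w \<bullet> a < \<beta>" "w \<bullet> c < \<beta>" "w \<bullet> b > \<beta>" "w \<bullet> d > \<beta>"
  shows False
proof -
  define h where "h x = w \<bullet> x - \<beta>" for x
  \<comment> \<open>This identity holds for every affine \<open>h\<close>; the alternating signs of \<open>h\<close> make each term negative.\<close>
  have "orient b c d * h a - orient a c d * h b + orient a b d * h c - orient a b c * h d = 0"
    unfolding h_def orient_def by (simp add: inner_prod_def algebra_simps)
  moreover have "orient b c d * h a < 0" "orient a c d * h b > 0"
    "orient a b d * h c < 0" "orient a b c * h d > 0"
    using assms by (simp_all add: h_def mult_pos_neg)
  ultimately show False by linarith
qed

section \<open>Points in convex position\<close>

lemma convex_position_subset:
  assumes "convex_position C" "S \<subseteq> C"
  shows "convex_position S"
  using assms hull_mono[of "S - _" "C - _"] unfolding convex_position_def by blast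

lemma convex_position_not_in_convex_hull:
  assumes "convex_position S" "p \<in> S" "A \<subseteq> S - {p}"
  shows "p \<notin> convex hull A"
  using assms hull_mono[OF assms(3)] unfolding convex_position_def by blast

lemma convex_position_orient_nonzero:
  assumes "convex_position S" "a \<in> S" "b \<in> S" "c \<in> S" "a \<noteq> b" "b \<noteq> c" "a \<noteq> c"
  shows "orient a b c \<noteq> 0"
proof
  assume "orient a b c = 0"
  then have "between (b, c) a \<or> between (c, a) b \<or> between (a, b) c"
    using collinear_if_orient_eq_0 collinear_between_cases by blast
  then show False
    using assms convex_position_not_in_convex_hull[OF assms(1), of a "{b, c}"]
      convex_position_not_in_convex_hull[OF assms(1), of b "{c, a}"]
      convex_position_not_in_convex_hull[OF assms(1), of c "{a, b}"]
    by (auto simp: between_mem_segment segment_convex_hull)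
qed

lemma convex_position_separating_direction:
  assumes "finite S" "convex_position S" "z \<in> S"
  obtains w where "\<And>p. p \<in> S - {z} \<Longrightarrow> w \<bullet> (p - z) > 0"
proof -
  have "z \<notin> convex hull (S - {z})" "closed (convex hull (S - {z}))"
    using assms by (auto simp: convex_position_def compact_imp_closed finite_imp_compact_convex_hull)
  then obtain w b where "w \<bullet> z < b" "\<forall>x\<in>convex hull (S - {z}). w \<bullet> x > b"
    using separating_hyperplane_closed_point[of "convex hull (S - {z})" z] by auto
  then have "w \<bullet> (p - z) > 0" if "p \<in> S - {z}" for p
    using that hull_subset[of "S - {z}" convex] by (fastforce simp: inner_diff_right)
  then show ?thesis using that by blast
qed

text \<open>The slope of \<open>p - z\<close> in the frame whose first axis is \<open>w\<close>; on the open half-plane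
\<open>w \<bullet> (p - z) > 0\<close> it orders points by their angle around \<open>z\<close>.\<close>
definition slope_from :: "pt \<Rightarrow> pt \<Rightarrow> pt \<Rightarrow> real" where
  "slope_from w z p = (fst w * snd (p - z) - snd w * fst (p - z)) / (w \<bullet> (p - z))"

lemma orient_pos_iff_slope_from_less:
  assumes "w \<bullet> (p - z) > 0" "w \<bullet> (q - z) > 0"
  shows "orient z p q > 0 \<longleftrightarrow> slope_from w z p < slope_from w z q"
proof -
  have "w \<bullet> w > 0"
    using assms(1) by (cases "w = 0") auto
  have "orient z p q * (w \<bullet> w) = (w \<bullet> (p - z)) * (fst w * snd (q - z) - snd w * fst (q - z))
      - (w \<bullet> (q - z)) * (fst w * snd (p - z) - snd w * fst (p - z))"
    unfolding orient_def by (simp add: inner_prod_def algebra_simps)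
  also have "\<dots> = (w \<bullet> (p - z)) * (w \<bullet> (q - z)) * (slope_from w z q - slope_from w z p)"
    using assms by (simp add: slope_from_def field_simps)
  finally have eq: "orient z p q * (w \<bullet> w) =
      (w \<bullet> (p - z)) * (w \<bullet> (q - z)) * (slope_from w z q - slope_from w z p)" .
  have "0 < orient z p q \<longleftrightarrow> 0 < orient z p q * (w \<bullet> w)"
    using \<open>w \<bullet> w > 0\<close> by (meson mult_pos_pos zero_less_mult_pos2)
  also have "\<dots> \<longleftrightarrow> 0 < slope_from w z q - slope_from w z p"
    unfolding eq using assms by (simp add: zero_less_mult_iff mult_less_0_iff)
  finally show ?thesis by simp
qed

lemma convex_position_orient_pos:
  assumes "convex_position S" "z \<in> S" "p \<in> S" "q \<in> S" "r \<in> S" "q \<notin> {z, p, r}"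
    and "orient z p q > 0" "orient z q r > 0" "orient z p r > 0"
  shows "orient p q r > 0"
proof (rule ccontr)
  assume "\<not> orient p q r > 0"
  then have "orient q p r \<ge> 0" using orient_swap[of q r p] orient_rotate[of p q r] by linarith
  then have "q \<in> convex hull {z, p, r}"
    using assms(7-9) by (intro in_triangle_if_orient_nonneg) auto
  then show False
    using convex_position_not_in_convex_hull[OF assms(1,4), of "{z, p, r}"] assms(2-6) by auto
qed

section \<open>Counterclockwise lists\<close>

definition ccw_list :: "pt list \<Rightarrow> bool" where
  "ccw_list ps \<longleftrightarrow>
     (\<forall>i j k. i < j \<longrightarrow> j < k \<longrightarrow> k < length ps \<longrightarrow> orient (ps ! i) (ps ! j) (ps ! k) > 0)"

lemma ccw_list_Cons:
  "ccw_list (x # ps) \<longleftrightarrow> sorted_wrt (\<lambda>p q. orient x p q > 0) ps \<and> ccw_list ps"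
  unfolding ccw_list_def sorted_wrt_iff_nth_less
proof safe
  fix i j k
  assume H: "\<forall>i j k. i < j \<longrightarrow> j < k \<longrightarrow> k < length (x # ps) \<longrightarrow>
    0 < orient ((x # ps) ! i) ((x # ps) ! j) ((x # ps) ! k)"
  show "i < j \<Longrightarrow> j < length ps \<Longrightarrow> 0 < orient x (ps ! i) (ps ! j)"
    using H[rule_format, of 0 "Suc i" "Suc j"] by simp
  show "i < j \<Longrightarrow> j < k \<Longrightarrow> k < length ps \<Longrightarrow> 0 < orient (ps ! i) (ps ! j) (ps ! k)"
    using H[rule_format, of "Suc i" "Suc j" "Suc k"] by simp
next
  fix i j k :: nat
  assume "\<forall>i j. i < j \<longrightarrow> j < length ps \<longrightarrow> 0 < orient x (ps ! i) (ps ! j)"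
    and "\<forall>i j k. i < j \<longrightarrow> j < k \<longrightarrow> k < length ps \<longrightarrow> 0 < orient (ps ! i) (ps ! j) (ps ! k)"
    and "i < j" "j < k" "k < length (x # ps)"
  then show "0 < orient ((x # ps) ! i) ((x # ps) ! j) ((x # ps) ! k)"
    by (cases i; cases j; cases k) auto
qed

lemma ccw_list_snoc:
  "ccw_list (ps @ [x]) \<longleftrightarrow> sorted_wrt (\<lambda>p q. orient p q x > 0) ps \<and> ccw_list ps"
  unfolding ccw_list_def sorted_wrt_iff_nth_less
proof safe
  fix i j k
  assume H: "\<forall>i j k. i < j \<longrightarrow> j < k \<longrightarrow> k < length (ps @ [x]) \<longrightarrow>
    0 < orient ((ps @ [x]) ! i) ((ps @ [x]) ! j) ((ps @ [x]) ! k)"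
  show "i < j \<Longrightarrow> j < length ps \<Longrightarrow> 0 < orient (ps ! i) (ps ! j) x"
    using H[rule_format, of i j "length ps"] by (simp add: nth_append)
  show "i < j \<Longrightarrow> j < k \<Longrightarrow> k < length ps \<Longrightarrow> 0 < orient (ps ! i) (ps ! j) (ps ! k)"
    using H[rule_format, of i j k] by (simp add: nth_append)
next
  fix i j k :: nat
  assume "\<forall>i j. i < j \<longrightarrow> j < length ps \<longrightarrow> 0 < orient (ps ! i) (ps ! j) x"
    and "\<forall>i j k. i < j \<longrightarrow> j < k \<longrightarrow> k < length ps \<longrightarrow> 0 < orient (ps ! i) (ps ! j) (ps ! k)"
    and "i < j" "j < k" "k < length (ps @ [x])"
  then show "0 < orient ((ps @ [x]) ! i) ((ps @ [x]) ! j) ((ps @ [x]) ! k)"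
    by (cases "k = length ps") (auto simp: nth_append)
qed

lemma ccw_list_rotate1:
  assumes "ccw_list ps"
  shows "ccw_list (rotate1 ps)"
proof (cases ps)
  case (Cons x xs)
  then show ?thesis
    using assms orient_rotate[of x] by (simp add: ccw_list_Cons ccw_list_snoc)
qed (use assms in simp)

lemma ccw_list_rotate:
  assumes "ccw_list ps"
  shows "ccw_list (rotate m ps)"
  by (induction m) (simp_all add: assms ccw_list_rotate1)

lemma ccw_list_map_nth:
  assumes "ccw_list ps" "sorted_wrt (<) is" "set is \<subseteq> {..<length ps}"
  shows "ccw_list (map ((!) ps) is)"
  unfolding ccw_list_def
proof (intro allI impI)
  fix i j k assume "i < j" "j < k" "k < length (map ((!) ps) is)"
  moreover have "is ! k < length ps" using assms(3) calculation(3) by (simp add: subset_iff)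
  ultimately show "orient (map ((!) ps) is ! i) (map ((!) ps) is ! j) (map ((!) ps) is ! k) > 0"
    using assms(1,2) sorted_wrt_nth_less[OF assms(2)] by (simp add: ccw_list_def)
qed

lemma ccw_list_orient_sign:
  assumes "ccw_list ps" "a < b" "b < length ps" "c < length ps" "c \<noteq> a" "c \<noteq> b"
  shows "orient (ps ! a) (ps ! b) (ps ! c) > 0 \<longleftrightarrow> \<not> (a < c \<and> c < b)"
    and "orient (ps ! a) (ps ! b) (ps ! c) \<noteq> 0"
proof -
  have ccw: "orient (ps ! i) (ps ! j) (ps ! k) > 0" if "i < j" "j < k" "k < length ps" for i j k
    using assms(1) that by (simp add: ccw_list_def)
  consider "c < a" | "a < c \<and> c < b" | "b < c" using assms(5,6) by linarith
  then have "if a < c \<and> c < b then orient (ps ! a) (ps ! b) (ps ! c) < 0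
      else orient (ps ! a) (ps ! b) (ps ! c) > 0"
  proof cases
    case 1 then show ?thesis using ccw[of c a b] assms orient_rotate[of "ps ! c"] by auto
  next
    case 2 then show ?thesis using ccw[of a c b] assms orient_swap[of "ps ! a" "ps ! c"] by auto
  next
    case 3 then show ?thesis using ccw[of a b c] assms by auto
  qed
  then show "orient (ps ! a) (ps ! b) (ps ! c) > 0 \<longleftrightarrow> \<not> (a < c \<and> c < b)"
    and "orient (ps ! a) (ps ! b) (ps ! c) \<noteq> 0"
    by (auto split: if_splits)
qed

lemma convex_position_sorted_around:
  assumes "finite S" "convex_position S" "z \<in> S"
  obtains ys where "distinct ys" "set ys = S - {z}" "sorted_wrt (\<lambda>p q. orient z p q > 0) ys"
proof -
  obtain w where w: "\<And>p. p \<in> S - {z} \<Longrightarrow> w \<bullet> (p - z) > 0"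
    using convex_position_separating_direction[OF assms] by blast
  define T where "T = S - {z}"
  have slope_less: "orient z p q > 0 \<longleftrightarrow> slope_from w z p < slope_from w z q"
    if "p \<in> T" "q \<in> T" for p q
    using orient_pos_iff_slope_from_less w that by (simp add: T_def)
  have "inj_on (slope_from w z) T"
  proof (rule inj_onI)
    fix p q assume pq: "p \<in> T" "q \<in> T" "slope_from w z p = slope_from w z q"
    then have "\<not> orient z p q > 0" "\<not> orient z q p > 0"
      using slope_less by auto
    then have "orient z p q = 0"
      using orient_swap[of z q p] by linarith
    then show "p = q"
      using convex_position_orient_nonzero[OF assms(2,3), of p q] pq by (auto simp: T_def)
  qed
  obtain xs where "distinct xs" "set xs = T"
    using finite_distinct_list[of T] assms(1) by (auto simp: T_def)
  define ys where "ys = sort_key (slope_from w z) xs"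
  have ys: "distinct ys" "set ys = T"
    using \<open>distinct xs\<close> \<open>set xs = T\<close> by (simp_all add: ys_def)
  have "sorted_wrt (<) (map (slope_from w z) ys)"
    using ys \<open>inj_on (slope_from w z) T\<close> by (simp add: strict_sorted_iff ys_def distinct_map)
  then have "sorted_wrt (\<lambda>p q. orient z p q > 0) ys"
    unfolding sorted_wrt_map by (rule sorted_wrt_mono_rel[rotated]) (use slope_less ys(2) in blast)
  with ys show ?thesis
    using that by (simp add: T_def)
qed

lemma convex_position_ccw_list:
  assumes "finite S" "convex_position S" "z \<in> S"
  obtains ps where "distinct ps" "set ps = S" "hd ps = z" "ccw_list ps"
proof -
  obtain ys where ys: "distinct ys" "set ys = S - {z}"
    and around_z: "sorted_wrt (\<lambda>p q. orient z p q > 0) ys"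
    using convex_position_sorted_around[OF assms] by blast
  have "ccw_list ys"
    unfolding ccw_list_def
  proof (intro allI impI)
    fix i j k assume ijk: "i < j" "j < k" "k < length ys"
    have in_S: "ys ! i \<in> S - {z}" "ys ! j \<in> S - {z}" "ys ! k \<in> S - {z}"
      using ijk ys(2) nth_mem[of _ ys] by (metis order.strict_trans)+
    have middle: "ys ! j \<notin> {z, ys ! i, ys ! k}"
      using ijk in_S(2) nth_eq_iff_index_eq[OF ys(1)] by simp
    have around: "orient z (ys ! i) (ys ! j) > 0" "orient z (ys ! j) (ys ! k) > 0"
      "orient z (ys ! i) (ys ! k) > 0"
      using ijk sorted_wrt_nth_less[OF around_z] by simp_all
    show "orient (ys ! i) (ys ! j) (ys ! k) > 0"
      by (rule convex_position_orient_pos[OF assms(2,3)]) (use in_S middle around in simp_all)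
  qed
  moreover have "distinct (z # ys)" "set (z # ys) = S"
    using ys assms(3) by auto
  ultimately show ?thesis
    using around_z by (intro that[of "z # ys"]) (simp_all add: ccw_list_Cons)
qed

lemma ccw_list_orient_nonzero:
  assumes "ccw_list ps" "a < length ps" "b < length ps" "c < length ps"
    and "a \<noteq> b" "b \<noteq> c" "a \<noteq> c"
  shows "orient (ps ! a) (ps ! b) (ps ! c) \<noteq> 0"
proof (cases "a < b")
  case False
  then have "orient (ps ! b) (ps ! a) (ps ! c) \<noteq> 0"
    using assms ccw_list_orient_sign(2)[OF assms(1), of b a c] by simp
  then show ?thesis
    using orient_swap[of "ps ! a" "ps ! c" "ps ! b"] orient_rotate[of "ps ! b"] by simp
qed (use assms ccw_list_orient_sign(2) in auto)

lemma ccw_list_chords_noncrossing: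
  assumes "ccw_list ps" "p < q" "q < length ps" "p' < q'" "q' < length ps" "{p, q} \<noteq> {p', q'}"
    and "\<not> (p < p' \<and> p' < q \<and> q < q')" "\<not> (p' < p \<and> p < q' \<and> q' < q)"
  shows "convex hull ((!) ps ` {p, q}) \<inter> convex hull ((!) ps ` {p', q'})
    \<subseteq> (!) ps ` ({p, q} \<inter> {p', q'})"
proof (cases "{p, q} \<inter> {p', q'} = {}")
  case True
  have same_side: "(p < p' \<and> p' < q) \<longleftrightarrow> (p < q' \<and> q' < q)"
    using True assms(4,7,8) by auto
  have "orient (ps ! p) (ps ! q) (ps ! p') \<noteq> 0" "orient (ps ! p) (ps ! q) (ps ! q') \<noteq> 0"
    and "orient (ps ! p) (ps ! q) (ps ! p') > 0 \<longleftrightarrow> orient (ps ! p) (ps ! q) (ps ! q') > 0"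
    using True assms(4,5) same_side ccw_list_orient_sign[OF assms(1-3)] by auto
  then have "orient (ps ! p) (ps ! q) (ps ! p') * orient (ps ! p) (ps ! q) (ps ! q') > 0"
    by (metis linorder_neqE_linordered_idom mult_neg_neg mult_pos_pos)
  then show ?thesis
    using segments_disjoint_if_same_side by simp
next
  case False
  then obtain s where s: "s \<in> {p, q}" "s \<in> {p', q'}" by blast
  define t where "t = (if s = p then q else p)"
  define u where "u = (if s = p' then q' else p')"
  have st: "{p, q} = {s, t}" and su: "{p', q'} = {s, u}"
    using s by (auto simp: t_def u_def)
  have distinct: "s \<noteq> t" "s \<noteq> u" "t \<noteq> u"
    using s assms(2,4,6) st su by (auto simp: t_def u_def)
  have "orient (ps ! s) (ps ! t) (ps ! u) \<noteq> 0"
    using distinct s assms(2-5) by (intro ccw_list_orient_nonzero[OF assms(1)]) (auto simp: t_def u_def)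
  then have "convex hull {ps ! s, ps ! t} \<inter> convex hull {ps ! s, ps ! u} \<subseteq> {ps ! s}"
    by (rule segments_with_common_end_meet_only_there)
  then show ?thesis
    unfolding st su by auto
qed

lemma ccw_list_separated_in_order:
  assumes "ccw_list ps" "hd ps \<in> L" "last ps \<in> R"
    and "\<forall>p\<in>L. w \<bullet> p < \<beta>" "\<forall>q\<in>R. \<beta> < w \<bullet> q"
    and "i < length ps" "j < length ps" "ps ! i \<in> L" "ps ! j \<in> R"
  shows "i < j"
proof (rule ccontr)
  assume "\<not> i < j"
  \<comment> \<open>then the first point, \<open>ps ! j\<close>, \<open>ps ! i\<close> and the last point alternate between the sides\<close>
  define N where "N = length ps"
  have LR: "x \<in> L \<Longrightarrow> x \<notin> R" for x
    using assms(4,5) by fastforce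
  have "ps \<noteq> []"
    using assms(6) by auto
  then have ends: "ps ! 0 \<in> L" "ps ! (N - 1) \<in> R"
    using assms(2,3) by (simp_all add: N_def hd_conv_nth last_conv_nth)
  then have "j \<noteq> 0" "i \<noteq> j" "i \<noteq> N - 1"
    using assms(8,9) LR by metis+
  then have "0 < j" "j < i" "i < N - 1"
    using \<open>\<not> i < j\<close> assms(6) by (auto simp: N_def)
  then have "orient (ps ! 0) (ps ! j) (ps ! i) > 0" "orient (ps ! 0) (ps ! j) (ps ! (N - 1)) > 0"
    "orient (ps ! 0) (ps ! i) (ps ! (N - 1)) > 0" "orient (ps ! j) (ps ! i) (ps ! (N - 1)) > 0"
    using assms(1) assms(6) unfolding ccw_list_def N_def by auto
  then show False
    using ends assms(4,5,8,9)
    by (intro line_separated_not_alternating[of "ps ! 0" "ps ! j" "ps ! i" "ps ! (N - 1)" w \<beta>]) auto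
qed

lemma rotate_to_first_hit:
  assumes "\<not> P (hd xs)" "\<exists>x\<in>set xs. P x"
  obtains m where "P (hd (rotate m xs))" "\<not> P (last (rotate m xs))"
proof -
  define ys where "ys = takeWhile (\<lambda>x. \<not> P x) xs"
  define zs where "zs = dropWhile (\<lambda>x. \<not> P x) xs"
  have "xs \<noteq> []"
    using assms(2) by auto
  then have "ys \<noteq> []"
    using assms(1) by (simp add: ys_def takeWhile_eq_Nil_iff)
  have "zs \<noteq> []"
    using assms(2) by (auto simp: zs_def dropWhile_eq_Nil_conv)
  have "rotate (length ys) xs = zs @ ys"
    using rotate_append[of ys zs] by (simp add: ys_def zs_def)
  moreover have "P (hd zs)"
    using hd_dropWhile[of "\<lambda>x. \<not> P x" xs] \<open>zs \<noteq> []\<close> by (simp add: zs_def)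
  moreover have "\<not> P (last ys)"
    using last_in_set[OF \<open>ys \<noteq> []\<close>] set_takeWhileD[of "last ys" "\<lambda>x. \<not> P x" xs]
    by (simp add: ys_def)
  ultimately show ?thesis
    using that[of "length ys"] \<open>ys \<noteq> []\<close> \<open>zs \<noteq> []\<close> by simp
qed

lemma ccw_list_left_block:
  assumes "finite (L \<union> R)" "convex_position (L \<union> R)" "L \<noteq> {}" "R \<noteq> {}"
    and "\<forall>p\<in>L. w \<bullet> p < \<beta>" "\<forall>q\<in>R. \<beta> < w \<bullet> q"
  obtains ps where "distinct ps" "set ps = L \<union> R" "ccw_list ps"
    "\<And>i j. i < length ps \<Longrightarrow> j < length ps \<Longrightarrow> ps ! i \<in> L \<Longrightarrow> ps ! j \<in> R \<Longrightarrow> i < j"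
proof -
  obtain z where "z \<in> R"
    using assms(4) by blast
  then obtain ps0 where ps0: "distinct ps0" "set ps0 = L \<union> R" "hd ps0 = z" "ccw_list ps0"
    using convex_position_ccw_list[OF assms(1,2)] by blast
  have "hd ps0 \<notin> L"
    using ps0(3) \<open>z \<in> R\<close> assms(5,6) by fastforce
  then obtain m where first: "hd (rotate m ps0) \<in> L" and last: "last (rotate m ps0) \<notin> L"
    using rotate_to_first_hit[of "\<lambda>p. p \<in> L" ps0] ps0(2) assms(3) by blast
  have ps: "distinct (rotate m ps0)" "set (rotate m ps0) = L \<union> R" "ccw_list (rotate m ps0)"
    using ps0 by (simp_all add: ccw_list_rotate)
  have "rotate m ps0 \<noteq> []"
    using ps0(2) \<open>z \<in> R\<close> by auto
  then have "last (rotate m ps0) \<in> R"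
    using last_in_set[of "rotate m ps0"] ps(2) last by blast
  from ps ccw_list_separated_in_order[OF ps(3) first this assms(5,6)] show ?thesis
    by (rule that)
qed

section \<open>Long chains or large antichains\<close>

lemma successively_less_length_le_card:
  fixes xs :: "'a::linorder list"
  assumes "finite I" "set xs \<subseteq> I" "successively (<) xs"
  shows "length xs \<le> card I"
proof -
  have "distinct xs"
    using assms(3) by (simp add: successively_conv_sorted_wrt strict_sorted_iff)
  then show ?thesis
    using card_mono[OF assms(1,2)] by (simp add: distinct_card[symmetric])
qed

lemma large_fibre:
  assumes "finite I" "f \<in> I \<rightarrow> {1..<n}" "(n - 1) * (m - 1) < card I"
  obtains v where "m \<le> card (f -` {v} \<inter> I)"
proof -
  have "I \<noteq> {}"
    using assms(3) by auto
  then have "{1..<n} \<noteq> {}"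
    using assms(2) by blast
  then obtain v where "card I \<le> card (f -` {v} \<inter> I) * (n - 1)"
    using pigeonhole_card[OF assms(2,1)] by auto
  then have "(m - 1) * (n - 1) < card (f -` {v} \<inter> I) * (n - 1)"
    using assms(3) by (metis order.strict_trans2 mult.commute)
  then have "m \<le> card (f -` {v} \<inter> I)"
    by (simp add: mult_less_cancel2, arith)
  then show ?thesis
    by (rule that)
qed

lemma sorted_sublist_of_length:
  fixes K :: "'a::linorder set"
  assumes "finite K" "m \<le> card K"
  obtains ys where "length ys = m" "set ys \<subseteq> K" "sorted_wrt (<) ys"
proof
  show "length (take m (sorted_list_of_set K)) = m" "sorted_wrt (<) (take m (sorted_list_of_set K))"
    using assms by simp_all
  show "set (take m (sorted_list_of_set K)) \<subseteq> K"
    using assms(1) set_take_subset[of m "sorted_list_of_set K"] by simp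
qed

lemma long_chain_or_large_antichain:
  fixes I :: "'a::linorder set" and P :: "'a \<Rightarrow> 'a \<Rightarrow> bool"
  assumes "finite I" "(n - 1) * (m - 1) < card I"
  shows "(\<exists>xs. length xs = n \<and> set xs \<subseteq> I \<and> successively (\<lambda>x y. x < y \<and> P x y) xs)
       \<or> (\<exists>ys. length ys = m \<and> set ys \<subseteq> I \<and> sorted_wrt (\<lambda>x y. x < y \<and> \<not> P x y) ys)"
proof -
  define chain where "chain xs \<longleftrightarrow> set xs \<subseteq> I \<and> successively (\<lambda>x y. x < y \<and> P x y) xs" for xs
  define ending where "ending i = {xs. xs \<noteq> [] \<and> chain xs \<and> last xs = i}" for i
  define height where "height i = Max (length ` ending i)" for i
  have finite_lengths: "finite (length ` ending i)" for i
  proof (rule finite_subset[of _ "{..card I}"])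
    show "length ` ending i \<subseteq> {..card I}"
      using successively_less_length_le_card[OF assms(1)] successively_mono
      by (fastforce simp: ending_def chain_def)
  qed simp
  have height_ge: "length xs \<le> height i" if "xs \<in> ending i" for xs i
    unfolding height_def using finite_lengths that by (intro Max_ge) auto
  have height_attained: "\<exists>xs\<in>ending i. length xs = height i" if "i \<in> I" for i
  proof -
    have "[i] \<in> ending i"
      using that by (simp add: ending_def chain_def)
    then have "Max (length ` ending i) \<in> length ` ending i"
      using Max_in[OF finite_lengths] by blast
    then show ?thesis
      unfolding height_def by auto
  qed
  show ?thesis
  proof (cases "\<exists>i\<in>I. n \<le> height i")
    case True
    then obtain i xs where "xs \<in> ending i" "n \<le> length xs"
      using height_attained by metis
    then have "set xs \<subseteq> I" "successively (\<lambda>x y. x < y \<and> P x y) (take n xs @ drop n xs)"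
      by (simp_all add: ending_def chain_def)
    then have "length (take n xs) = n \<and> set (take n xs) \<subseteq> I
        \<and> successively (\<lambda>x y. x < y \<and> P x y) (take n xs)"
      using \<open>n \<le> length xs\<close> set_take_subset[of n xs] by (simp only: successively_append_iff) auto
    then show ?thesis by blast
  next
    case False
    have "height i \<in> {1..<n}" if "i \<in> I" for i
      using False that height_ge[of "[i]" i] by (auto simp: ending_def chain_def not_le)
    then obtain v where "m \<le> card (height -` {v} \<inter> I)"
      using large_fibre[OF assms(1) _ assms(2)] by blast
    define K where "K = height -` {v} \<inter> I"
    \<comment> \<open>An increase \<open>P i j\<close> inside one level set would extend a longest chain ending at \<open>i\<close>.\<close>
    have antichain: "\<not> P i j" if ij: "i \<in> K" "j \<in> K" "i < j" for i j
    proof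
      assume "P i j"
      obtain xs where xs: "xs \<in> ending i" "length xs = height i"
        using height_attained ij(1) by (auto simp: K_def)
      then have "xs @ [j] \<in> ending j"
        using ij \<open>P i j\<close> by (auto simp: ending_def chain_def K_def successively_append_iff)
      then have "height i + 1 \<le> height j"
        using height_ge xs(2) by fastforce
      then show False
        using ij(1,2) by (simp add: K_def)
    qed
    obtain ys where ys: "length ys = m" "set ys \<subseteq> K" "sorted_wrt (<) ys"
      using sorted_sublist_of_length[of K m] assms(1) \<open>m \<le> card (height -` {v} \<inter> I)\<close>
      by (auto simp: K_def)
    have "sorted_wrt (\<lambda>x y. x < y \<and> \<not> P x y) ys"
      using ys(3) by (rule sorted_wrt_mono_rel[rotated]) (use antichain ys(2) in blast)
    moreover have "K \<subseteq> I"
      by (simp add: K_def)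
    ultimately show ?thesis
      using ys(1,2) by blast
  qed
qed

section \<open>Ladders along a convex polygon\<close>

text \<open>\<open>u\<^sub>i\<close> is placed at position \<open>i - 1\<close> and \<open>v\<^sub>i\<close> at position \<open>2n - i\<close>: the two paths run
along the two halves of the sequence and the rungs become nested chords.\<close>
definition ladder_pos :: "nat \<Rightarrow> bool \<times> nat \<Rightarrow> nat" where
  "ladder_pos n v = (if fst v then 2 * n - snd v else snd v - 1)"

definition ladder_chord :: "nat \<Rightarrow> nat \<Rightarrow> nat \<Rightarrow> bool" where
  "ladder_chord n p q \<longleftrightarrow> p < q \<and> q < 2 * n \<and> (q = Suc p \<and> Suc p \<noteq> n \<or> p + q + 1 = 2 * n)"

lemma inj_on_ladder_pos: "inj_on (ladder_pos n) (ladder_V n)"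
  unfolding inj_on_def ladder_V_def ladder_pos_def by auto

lemma ladder_pos_less: "v \<in> ladder_V n \<Longrightarrow> ladder_pos n v < 2 * n"
  unfolding ladder_V_def ladder_pos_def by auto

lemma ladder_E_subset: "e \<in> ladder_E n \<Longrightarrow> e \<subseteq> ladder_V n"
  unfolding ladder_E_def ladder_V_def by auto

lemma ladder_E_chord:
  assumes "e \<in> ladder_E n"
  obtains p q where "ladder_chord n p q" "ladder_pos n ` e = {p, q}"
  using assms unfolding ladder_E_def
proof (elim UnE CollectE exE conjE)
  fix b i assume e: "e = {(b, i), (b, Suc i)}" and i: "1 \<le> i" "i < n"
  show thesis
  proof (cases b)
    case True
    then have "ladder_pos n ` e = {2 * n - Suc i, 2 * n - i}"
      using e by (auto simp: ladder_pos_def)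
    moreover have "ladder_chord n (2 * n - Suc i) (2 * n - i)"
      using i by (auto simp: ladder_chord_def)
    ultimately show thesis by (rule that[rotated])
  next
    case False
    then have "ladder_pos n ` e = {i - 1, i}"
      using e by (auto simp: ladder_pos_def)
    moreover have "ladder_chord n (i - 1) i"
      using i by (auto simp: ladder_chord_def)
    ultimately show thesis by (rule that[rotated])
  qed
next
  fix i assume e: "e = {(False, i), (True, i)}" and i: "1 \<le> i" "i \<le> n"
  then have "ladder_pos n ` e = {i - 1, 2 * n - i}"
    by (auto simp: ladder_pos_def)
  moreover have "ladder_chord n (i - 1) (2 * n - i)"
    using i by (auto simp: ladder_chord_def)
  ultimately show thesis by (rule that[rotated])
qed

lemma ladder_chords_not_interleaved:
  assumes "ladder_chord n p q" "ladder_chord n p' q'"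
  shows "\<not> (p < p' \<and> p' < q \<and> q < q')"
  using assms unfolding ladder_chord_def by linarith

lemma mono_noncrossing_ladder_in_ccw_list:
  assumes "ccw_list qs" "distinct qs" "length qs = 2 * n" "set qs \<subseteq> C"
    and "\<And>p q. ladder_chord n p q \<Longrightarrow> col {qs ! p, qs ! q} = c"
  shows "mono_noncrossing_copy col C (ladder_V n) (ladder_E n) (\<lambda>v. qs ! ladder_pos n v)"
  unfolding mono_noncrossing_copy_def
proof (intro conjI)
  have image: "(\<lambda>v. qs ! ladder_pos n v) ` X = (!) qs ` ladder_pos n ` X" for X
    by auto
  have "inj_on ((!) qs) (ladder_pos n ` ladder_V n)"
    using assms(2,3) ladder_pos_less by (auto intro!: inj_on_nth)
  then show "inj_on (\<lambda>v. qs ! ladder_pos n v) (ladder_V n)"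
    using comp_inj_on[OF inj_on_ladder_pos] by (simp add: comp_def)
  show "(\<lambda>v. qs ! ladder_pos n v) ` ladder_V n \<subseteq> C"
    using assms(3,4) ladder_pos_less by (auto intro!: nth_mem[THEN subsetD[OF assms(4)]])
  show "\<exists>c. \<forall>e\<in>ladder_E n. col ((\<lambda>v. qs ! ladder_pos n v) ` e) = c"
  proof (intro exI ballI)
    fix e assume "e \<in> ladder_E n"
    then obtain p q where "ladder_chord n p q" "ladder_pos n ` e = {p, q}"
      by (rule ladder_E_chord)
    then show "col ((\<lambda>v. qs ! ladder_pos n v) ` e) = c"
      unfolding image using assms(5) by simp
  qed
  show "\<forall>e\<in>ladder_E n. \<forall>f\<in>ladder_E n. e \<noteq> f \<longrightarrow>
      convex hull ((\<lambda>v. qs ! ladder_pos n v) ` e) \<inter> convex hull ((\<lambda>v. qs ! ladder_pos n v) ` f)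
        \<subseteq> (\<lambda>v. qs ! ladder_pos n v) ` (e \<inter> f)"
  proof (intro ballI impI)
    fix e f assume ef: "e \<in> ladder_E n" "f \<in> ladder_E n" "e \<noteq> f"
    obtain p q where pq: "ladder_chord n p q" "ladder_pos n ` e = {p, q}"
      using ef(1) by (rule ladder_E_chord)
    obtain p' q' where pq': "ladder_chord n p' q'" "ladder_pos n ` f = {p', q'}"
      using ef(2) by (rule ladder_E_chord)
    have sub: "e \<subseteq> ladder_V n" "f \<subseteq> ladder_V n"
      using ef by (simp_all add: ladder_E_subset)
    have "{p, q} \<noteq> {p', q'}"
      using ef(3) inj_on_image_eq_iff[OF inj_on_ladder_pos sub] pq(2) pq'(2) by simp
    moreover have "ladder_pos n ` (e \<inter> f) = {p, q} \<inter> {p', q'}"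
      using inj_on_image_Int[OF inj_on_ladder_pos sub] pq(2) pq'(2) by simp
    ultimately show "convex hull ((\<lambda>v. qs ! ladder_pos n v) ` e) \<inter> convex hull ((\<lambda>v. qs ! ladder_pos n v) ` f)
        \<subseteq> (\<lambda>v. qs ! ladder_pos n v) ` (e \<inter> f)"
      unfolding image pq(2) pq'(2)
      using ccw_list_chords_noncrossing[OF assms(1)] ladder_chords_not_interleaved[OF pq(1) pq'(1)]
        ladder_chords_not_interleaved[OF pq'(1) pq(1)] pq(1) pq'(1) assms(3)
      by (simp add: ladder_chord_def)
  qed
qed

lemma mono_noncrossing_ladder_in_sublist:
  assumes "ccw_list ps" "distinct ps" "set ps \<subseteq> C"
    and "sorted_wrt (<) is" "set is \<subseteq> {..<length ps}" "length is = 2 * n"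
    and "\<And>p q. ladder_chord n p q \<Longrightarrow> col {ps ! (is ! p), ps ! (is ! q)} = c"
  shows "\<exists>\<phi>. mono_noncrossing_copy col C (ladder_V n) (ladder_E n) \<phi>"
proof -
  have "distinct (map ((!) ps) is)"
    using assms(2,4,5) by (auto simp: distinct_map strict_sorted_iff intro!: inj_on_nth)
  moreover have "set (map ((!) ps) is) \<subseteq> C"
    using assms(3,5) by (auto intro!: nth_mem[THEN subsetD[OF assms(3)]])
  moreover have "col {map ((!) ps) is ! p, map ((!) ps) is ! q} = c" if "ladder_chord n p q" for p q
    using assms(6,7) that by (simp add: ladder_chord_def)
  ultimately have "mono_noncrossing_copy col C (ladder_V n) (ladder_E n)
      (\<lambda>v. map ((!) ps) is ! ladder_pos n v)"
    using ccw_list_map_nth[OF assms(1,4,5)] assms(6) by (intro mono_noncrossing_ladder_in_ccw_list) auto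
  then show ?thesis by blast
qed

lemma mono_noncrossing_ladder_from_antichain:
  fixes col :: "pt set \<Rightarrow> bool"
  assumes "ccw_list ps" "distinct ps" "set ps \<subseteq> C"
    and "set ys \<subseteq> {..<length ps}" "length ys = 2 * n"
    and "sorted_wrt (\<lambda>x y. x < y \<and> col {ps ! x, ps ! y} \<noteq> c) ys"
  shows "\<exists>\<phi>. mono_noncrossing_copy col C (ladder_V n) (ladder_E n) \<phi>"
proof (rule mono_noncrossing_ladder_in_sublist[OF assms(1-3) _ assms(4,5)])
  show "sorted_wrt (<) ys"
    using assms(6) by (rule sorted_wrt_mono_rel[rotated]) simp
  show "col {ps ! (ys ! p), ps ! (ys ! q)} = (\<not> c)" if "ladder_chord n p q" for p q
    using sorted_wrt_nth_less[OF assms(6), of p q] that assms(5) by (auto simp: ladder_chord_def)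
qed

lemma mono_noncrossing_ladder_from_two_paths:
  assumes "ccw_list ps" "distinct ps" "set ps \<subseteq> C"
    and "set xs \<subseteq> {..<length ps}" "set ys \<subseteq> {..<length ps}" "length xs = n" "length ys = n"
    and "successively (\<lambda>x y. x < y \<and> col {ps ! x, ps ! y} = c) xs"
    and "successively (\<lambda>x y. x < y \<and> col {ps ! x, ps ! y} = c) ys"
    and "\<And>x y. x \<in> set xs \<Longrightarrow> y \<in> set ys \<Longrightarrow> x < y \<and> col {ps ! x, ps ! y} = c"
  shows "\<exists>\<phi>. mono_noncrossing_copy col C (ladder_V n) (ladder_E n) \<phi>"
proof (rule mono_noncrossing_ladder_in_sublist[OF assms(1-3)])
  have "successively (<) xs" "successively (<) ys"
    using assms(8,9) by (blast intro: successively_mono)+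
  then show "sorted_wrt (<) (xs @ ys)"
    using assms(10) by (simp add: sorted_wrt_append successively_conv_sorted_wrt)
  show "set (xs @ ys) \<subseteq> {..<length ps}" "length (xs @ ys) = 2 * n"
    using assms(4-7) by auto
  show "col {ps ! ((xs @ ys) ! p), ps ! ((xs @ ys) ! q)} = c" if "ladder_chord n p q" for p q
  proof -
    have "q = Suc p \<and> q < n \<or> q = Suc p \<and> n \<le> p \<and> q < 2 * n \<or> p < n \<and> q = 2 * n - 1 - p"
      using that unfolding ladder_chord_def by linarith
    then consider "q = Suc p" "q < n" | "q = Suc p" "n \<le> p" "q < 2 * n" | "p < n" "q = 2 * n - 1 - p"
      by blast
    then show ?thesis
    proof cases
      case 1
      then show ?thesis
        using successively_nth[OF assms(8), of p] assms(6) by (simp add: nth_append)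
    next
      case 2
      then show ?thesis
        using successively_nth[OF assms(9), of "p - n"] assms(6,7) by (simp add: nth_append Suc_diff_le)
    next
      case 3
      then show ?thesis
        using assms(6,7,10) by (simp add: nth_append)
    qed
  qed
qed

lemma card_nth_preimage:
  assumes "distinct ps" "X \<subseteq> set ps"
  shows "card {i. i < length ps \<and> ps ! i \<in> X} = card X"
proof -
  have "(!) ps ` {i. i < length ps \<and> ps ! i \<in> X} = X"
    using assms(2) by (force simp: in_set_conv_nth)
  then have "bij_betw ((!) ps) {i. i < length ps \<and> ps ! i \<in> X} X"
    by (auto intro!: bij_betw_subset[OF bij_betw_nth[OF assms(1) refl refl]])
  then show ?thesis
    by (rule bij_betw_same_card)
qed

lemma mono_noncrossing_ladder_from_split:
  fixes col :: "pt set \<Rightarrow> bool"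
  assumes "ccw_list ps" "distinct ps" "set ps \<subseteq> C" "n \<ge> 1"
    and "IL \<subseteq> {..<length ps}" "IR \<subseteq> {..<length ps}" "card IL = 2 * n^2" "card IR = 2 * n^2"
    and "\<And>x y. x \<in> IL \<Longrightarrow> y \<in> IR \<Longrightarrow> x < y \<and> col {ps ! x, ps ! y} = c"
  shows "\<exists>\<phi>. mono_noncrossing_copy col C (ladder_V n) (ladder_E n) \<phi>"
proof -
  have "finite IL" "finite IR"
    using assms(5,6) finite_subset by blast+
  have "(n - 1) * (2 * n - 1) < 2 * n^2"
    using assms(4) by (cases n) (simp_all add: power2_eq_square)
  then have bound: "(n - 1) * (2 * n - 1) < card IL" "(n - 1) * (2 * n - 1) < card IR"
    using assms(7,8) by simp_all
  consider zs where "set zs \<subseteq> {..<length ps}" "length zs = 2 * n"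
      "sorted_wrt (\<lambda>x y. x < y \<and> col {ps ! x, ps ! y} \<noteq> c) zs"
    | xs ys where "length xs = n" "set xs \<subseteq> IL" "successively (\<lambda>x y. x < y \<and> col {ps ! x, ps ! y} = c) xs"
      "length ys = n" "set ys \<subseteq> IR" "successively (\<lambda>x y. x < y \<and> col {ps ! x, ps ! y} = c) ys"
    using long_chain_or_large_antichain[OF \<open>finite IL\<close> bound(1), of "\<lambda>x y. col {ps ! x, ps ! y} = c"]
      long_chain_or_large_antichain[OF \<open>finite IR\<close> bound(2), of "\<lambda>x y. col {ps ! x, ps ! y} = c"]
      assms(5,6) by blast
  then show ?thesis
  proof cases
    case 1
    then show ?thesis
      by (rule mono_noncrossing_ladder_from_antichain[OF assms(1-3)])
  next
    case 2
    moreover have "x < y \<and> col {ps ! x, ps ! y} = c" if "x \<in> set xs" "y \<in> set ys" for x y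
      using 2 that assms(9) by blast
    ultimately show ?thesis
      using assms(5,6)
      by (intro mono_noncrossing_ladder_from_two_paths[OF assms(1-3), where xs = xs and ys = ys]) auto
  qed
qed

theorem lemmal:
  fixes n :: nat and C L R :: "pt set" and col :: "pt set \<Rightarrow> bool"
  assumes "n \<ge> 1"
    and "finite C" and "convex_position C"
    and "L \<subseteq> C" and "R \<subseteq> C" and "L \<inter> R = {}"
    and "card L = 2 * n^2" and "card R = 2 * n^2"
    and "\<exists>a b. a \<noteq> 0 \<and> (\<forall>p\<in>L. a \<bullet> p < b) \<and> (\<forall>q\<in>R. b < a \<bullet> q)"
    and "\<exists>c. \<forall>p\<in>L. \<forall>q\<in>R. col {p, q} = c"
  shows "\<exists>\<phi>. mono_noncrossing_copy col C (ladder_V n) (ladder_E n) \<phi>"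
proof -
  obtain c where c: "\<forall>p\<in>L. \<forall>q\<in>R. col {p, q} = c"
    using assms(10) by blast
  obtain w \<beta> where sep: "\<forall>p\<in>L. w \<bullet> p < \<beta>" "\<forall>q\<in>R. \<beta> < w \<bullet> q"
    using assms(9) by blast
  have "L \<noteq> {}" "R \<noteq> {}"
    using assms(1,7,8) by auto
  moreover have "finite (L \<union> R)" "convex_position (L \<union> R)"
    using assms(2-5) by (auto intro: finite_subset convex_position_subset)
  ultimately obtain ps where ps: "distinct ps" "set ps = L \<union> R" "ccw_list ps"
    and L_first: "\<And>i j. i < length ps \<Longrightarrow> j < length ps \<Longrightarrow> ps ! i \<in> L \<Longrightarrow> ps ! j \<in> R \<Longrightarrow> i < j"
    using ccw_list_left_block[of L R w \<beta>] sep by blast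
  show ?thesis
  proof (rule mono_noncrossing_ladder_from_split[OF ps(3,1) _ assms(1)])
    show "set ps \<subseteq> C"
      using ps(2) assms(4,5) by simp
    show "card {i. i < length ps \<and> ps ! i \<in> L} = 2 * n^2" "card {i. i < length ps \<and> ps ! i \<in> R} = 2 * n^2"
      using card_nth_preimage[OF ps(1), of L] card_nth_preimage[OF ps(1), of R] ps(2) assms(7,8) by simp_all
    show "x < y \<and> col {ps ! x, ps ! y} = c"
      if "x \<in> {i. i < length ps \<and> ps ! i \<in> L}" "y \<in> {i. i < length ps \<and> ps ! i \<in> R}" for x y
      using that L_first c by auto
  qed auto
qed

end
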